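(* Let $p\ge5$ and consider the white metallic tree $\mathcal W_\lambda$ under the leftmost assignment. Let $\nu$ be a node, $u$ its metallic code, and $w$ the metallic code of $\nu-1$ (empty if $\nu=1$). Then: (i) if $\nu$ is black, its signature is $1$ or $2$, and its $p-3$ sons in increasing order have metallic codes $w\,(h+1)$ for $h=1,\dots,p-4$, then $u\,0$; (ii) if $\nu$ is white with signature $0$, its $p-2$ sons in increasing order have codes $w\,h$ for $h=1,\dots,p-4$, then $u\,0$, then $u\,1$; (iii) if $\nu$ is white with signature $1$, its sons have codes $w\,(h+1)$ for $h=1,\dots,p-4$, then $u\,0$, then $u\,1$; (iv) if $\nu$ is white with signature $a\in\{2,\dots,p-3\}$, its sons have codes $w\,h$ for $h=1,\dots,p-3$, then $u\,0$.
   Context: Fix $p\ge5$. Metallic numbers: $m_{-1}=0$, $m_0=1$, $m_{n+2}=(p-2)m_{n+1}-m_n$. With $d=p-3$, $c=p-4$, the metallic code of a positive integer $n$ is the unique word $a_k\cdots a_0$ over $\{0,\dots,p-3\}$ with $a_k\ne0$, $n=\sum a_im_i$, containing no factor $d\,c^j\,d$ ($j\ge0$); the code of $0$ is empty; the signature of $n$ is the last digit $a_0$; $w\,e$ denotes $w$ followed by the digit $e$. White metallic tree under an assignment $\alpha$, $\mathcal W_\alpha$: nodes are the positive integers, black or white; root $1$ is white; nodes processed in increasing order, node $\nu$ receives $p-2$ sons if white and $p-3$ if black, namely the smallest unused integers in increasing order; the assignment gives the position of the unique black son among the sons, other sons being white. The leftmost assignment $\lambda$ puts the black son at position $1$ (the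 smallest son). *)

theory Defs
  imports Main
begin

fun met :: "nat \<Rightarrow> nat \<Rightarrow> int" where
  "met p 0 = 1"
| "met p (Suc 0) = int p - 2"
| "met p (Suc (Suc n)) = (int p - 2) * met p (Suc n) - met p n"

text \<open>Words are lists of digits written most significant first:
  the list [a_k, ..., a_0].  Appending a digit e is  w @ [e].\<close>
definition word_val :: "nat \<Rightarrow> nat list \<Rightarrow> int" where
  "word_val p ws = (\<Sum>i<length ws. int (ws ! (length ws - 1 - i)) * met p i)"

definition metallic_word :: "nat \<Rightarrow> nat list \<Rightarrow> bool" where
  "metallic_word p ws \<longleftrightarrow>
     (\<forall>a\<in>set ws. a \<le> p - 3) \<and> (ws \<noteq> [] \<longrightarrow> hd ws \<noteq> 0) \<and>
     \<not> (\<exists>xs ys j. ws = xs @ [p - 3] @ replicate j (p - 4) @ [p - 3] @ ys)"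

definition metallic_code :: "nat \<Rightarrow> nat \<Rightarrow> nat list" where
  "metallic_code p n = (THE ws. metallic_word p ws \<and> word_val p ws = int n)"

definition signature :: "nat \<Rightarrow> nat \<Rightarrow> nat" where
  "signature p n = last (metallic_code p n)"

text \<open>White metallic tree under an assignment alpha (alpha \<nu> = position, 1-based, of the
  black son among the sons of \<nu>).  Nodes are processed in increasing order and each takes
  the smallest unused integers, so the sons of each node form a contiguous block starting
  right after the block of the previous node.  tree_data p alpha n is the list
  [(first son of 1, black son of 1), ..., (first son of n, black son of n)].\<close>
primrec tree_data :: "nat \<Rightarrow> (nat \<Rightarrow> nat) \<Rightarrow> nat \<Rightarrow> (nat \<times> nat) list" where
  "tree_data p alpha 0 = []"
| "tree_data p alpha (Suc n) =
     (if n = 0 then [(2, 2 + alpha 1 - 1)]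
      else (let xs = tree_data p alpha n;
                f = fst (last xs) + (if n \<in> snd ` set xs then p - 3 else p - 2)
            in xs @ [(f, f + alpha (Suc n) - 1)]))"

definition is_black :: "nat \<Rightarrow> (nat \<Rightarrow> nat) \<Rightarrow> nat \<Rightarrow> bool" where
  "is_black p alpha \<nu> \<longleftrightarrow> \<nu> \<in> snd ` set (tree_data p alpha \<nu>)"

definition num_sons :: "nat \<Rightarrow> (nat \<Rightarrow> nat) \<Rightarrow> nat \<Rightarrow> nat" where
  "num_sons p alpha \<nu> = (if is_black p alpha \<nu> then p - 3 else p - 2)"

definition sons :: "nat \<Rightarrow> (nat \<Rightarrow> nat) \<Rightarrow> nat \<Rightarrow> nat list" where
  "sons p alpha \<nu> =
     (let f = fst (last (tree_data p alpha \<nu>)) in [f ..< f + num_sons p alpha \<nu>])"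

definition leftmost :: "nat \<Rightarrow> nat" where
  "leftmost \<nu> = 1"

end

theory Submission
  imports Defs
begin

(* With the leftmost assignment every black node is the first son of its father. Codes are
   handled reversed (least significant digit first): the code of n + 1 is obtained from that of
   n by an increment with carry, and the numbers whose codes extend code n by a last digit h are
   mshift n + h, for h up to the largest digit admissible after code n; the next such block
   starts at mshift (n + 1). By induction along the construction of the tree, the first son of
   node n + 1 has code (code n) @ [delta], where delta, 1 or 2, depends only on code n, and a
   node is black iff its code is w @ [delta] with delta computed from w. Hence the sons of n + 1
   have codes (code n) @ [delta], ..., (code n) @ [top] followed by (code (n + 1)) @ [0], ...,
   and the four cases are read off from the last digit and the colour of n + 1. *)

(* Codes are stored reversed, least significant digit first, so that appending a digit is Cons. *)
definition carries :: "nat \<Rightarrow> nat list \<Rightarrow> bool" where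
  "carries p r \<longleftrightarrow> (\<exists>j ys. r = replicate j (p - 4) @ [p - 3] @ ys)"

definition admissible :: "nat \<Rightarrow> nat list \<Rightarrow> bool" where
  "admissible p r \<longleftrightarrow>
     (\<forall>a\<in>set r. a \<le> p - 3) \<and>
     \<not> (\<exists>xs ys j. r = xs @ [p - 3] @ replicate j (p - 4) @ [p - 3] @ ys)"

lemma carries_Nil [simp]: "\<not> carries p []"
  by (simp add: carries_def)

lemma carries_Cons: "carries p (a # r) \<longleftrightarrow> a = p - 3 \<or> (a = p - 4 \<and> carries p r)"
  unfolding carries_def
proof
  assume "\<exists>j ys. a # r = replicate j (p - 4) @ [p - 3] @ ys"
  then obtain j ys where "a # r = replicate j (p - 4) @ [p - 3] @ ys"
    by blast
  then show "a = p - 3 \<or> a = p - 4 \<and> (\<exists>j ys. r = replicate j (p - 4) @ [p - 3] @ ys)"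
    by (cases j) auto
next
  assume "a = p - 3 \<or> a = p - 4 \<and> (\<exists>j ys. r = replicate j (p - 4) @ [p - 3] @ ys)"
  then show "\<exists>j ys. a # r = replicate j (p - 4) @ [p - 3] @ ys"
    by (metis append_Cons append_Nil replicate_0 replicate_Suc)
qed

lemma admissible_Nil [simp]: "admissible p []"
  by (simp add: admissible_def)

lemma admissible_Cons:
  "admissible p (a # r) \<longleftrightarrow> a \<le> p - 3 \<and> \<not> (a = p - 3 \<and> carries p r) \<and> admissible p r"
  unfolding admissible_def carries_def
  by (auto simp: Cons_eq_append_conv) metis+

lemma admissible_rev [simp]: "admissible p (rev r) \<longleftrightarrow> admissible p r"
proof -
  have "admissible p r" if "admissible p (rev r)" for r
    using that unfolding admissible_def
    by (auto simp: rev_swap[symmetric]) metis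
  then show ?thesis by (metis rev_rev_ident)
qed

lemma metallic_word_iff:
  "metallic_word p ws \<longleftrightarrow> admissible p ws \<and> (ws \<noteq> [] \<longrightarrow> hd ws \<noteq> 0)"
  unfolding metallic_word_def admissible_def by blast

fun rval :: "nat \<Rightarrow> nat \<Rightarrow> nat list \<Rightarrow> int" where
  "rval p k [] = 0"
| "rval p k (a # r) = int a * met p k + rval p (Suc k) r"

lemma rval_Suc_Suc:
  "rval p (Suc (Suc k)) r = (int p - 2) * rval p (Suc k) r - rval p k r"
proof (induction r arbitrary: k)
  case (Cons a r)
  then show ?case
    using Cons.IH[of "Suc k"] by (simp add: algebra_simps)
qed simp

lemma rval_append: "rval p k (r @ [a]) = rval p k r + int a * met p (k + length r)"
  by (induction r arbitrary: k) auto

lemma rval_eq_sum: "rval p k r = (\<Sum>i<length r. int (r ! i) * met p (i + k))"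
proof (induction r arbitrary: k)
  case (Cons a r)
  then show ?case
    by (simp add: sum.lessThan_Suc_shift del: sum.lessThan_Suc)
qed simp

lemma word_val_rev: "word_val p (rev r) = rval p 0 r"
  unfolding word_val_def rval_eq_sum by (auto simp: rev_nth intro!: sum.cong)

lemma word_val_Cons: "word_val p (a # w) = int a * met p (length w) + word_val p w"
  using word_val_rev[of p "rev w @ [a]"] word_val_rev[of p "rev w"]
  by (simp add: rval_append)

(* Incrementing a low end c^j d in place would exceed d or create the forbidden factor
   d c^(j-1) d, so the lowest digit becomes 0 and the carry propagates. *)
fun incr :: "nat \<Rightarrow> nat list \<Rightarrow> nat list" where
  "incr p [] = [1]"
| "incr p (a # r) = (if carries p (a # r) then 0 # incr p r else Suc a # r)"

definition rcode :: "nat \<Rightarrow> nat \<Rightarrow> nat list" where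
  "rcode p n = (incr p ^^ n) []"

(* The largest digit h for which h # r is admissible. *)
definition top_digit :: "nat \<Rightarrow> nat list \<Rightarrow> nat" where
  "top_digit p r = (if carries p r then p - 4 else p - 3)"

lemma incr_ne_Nil: "incr p r \<noteq> []"
  by (cases r) auto

lemma hd_incr_eq_0: "hd (incr p r) = 0 \<longleftrightarrow> carries p r"
  by (cases r) auto

lemma incr_last: "r = [] \<or> last r \<noteq> 0 \<Longrightarrow> last (incr p r) \<noteq> 0"
proof (induction r)
  case (Cons a r)
  then show ?case
    by (cases r) (auto simp: neq_Nil_conv)
qed simp

lemma rcode_0 [simp]: "rcode p 0 = []"
  and rcode_Suc [simp]: "rcode p (Suc n) = incr p (rcode p n)"
  by (simp_all add: rcode_def)

lemma rcode_last: "rcode p n = [] \<or> last (rcode p n) \<noteq> 0"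
  by (induction n) (simp_all add: incr_last)

lemma top_digit_rcode: "top_digit p (rcode p n) = (if hd (rcode p (Suc n)) = 0 then p - 4 else p - 3)"
  by (simp add: top_digit_def hd_incr_eq_0)

(* The value of the word (code n) @ [0]. *)
definition mshift :: "nat \<Rightarrow> nat \<Rightarrow> nat" where
  "mshift p n = nat (rval p 1 (rcode p n))"

lemma mshift_0 [simp]: "mshift p 0 = 0"
  by (simp add: mshift_def)

locale metallic =
  fixes p :: nat
  assumes four_le_p: "4 \<le> p"
begin

lemma met_pos_less: "0 < met p n \<and> met p n < met p (Suc n)"
proof (induction n)
  case 0
  then show ?case using four_le_p by simp
next
  case (Suc n)
  have "4 * met p (Suc n) \<le> int p * met p (Suc n)"
    using Suc four_le_p by (intro mult_right_mono) auto
  moreover have "met p (Suc (Suc n)) = int p * met p (Suc n) - 2 * met p (Suc n) - met p n"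
    by (simp add: algebra_simps)
  ultimately show ?case using Suc by linarith
qed

lemma met_pos: "0 < met p n"
  using met_pos_less by blast

lemma met_less_Suc: "met p n < met p (Suc n)"
  using met_pos_less by blast

lemma strict_mono_met: "strict_mono (met p)"
  unfolding strict_mono_Suc_iff using met_less_Suc by blast

lemma top_times_met_less: "int (p - 3) * met p n < met p (Suc n)"
proof (cases n)
  case 0
  then show ?thesis using four_le_p by simp
next
  case (Suc k)
  then show ?thesis
    using met_less_Suc[of k] four_le_p by (simp add: algebra_simps)
qed

lemma met_nonneg: "0 \<le> met p n"
  using met_pos less_imp_le by blast

lemma rval_nonneg: "0 \<le> rval p k r"
  by (induction r arbitrary: k) (simp_all add: met_nonneg)

lemma rval_le_Suc: "rval p k r \<le> rval p (Suc k) r"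
proof (induction r arbitrary: k)
  case (Cons a r)
  have "int a * met p k \<le> int a * met p (Suc k)"
    using met_less_Suc by (intro mult_left_mono) (auto intro: less_imp_le)
  then show ?case using Cons[of "Suc k"] by simp
qed simp

lemma word_val_less:
  "admissible p w \<Longrightarrow> word_val p w < met p (length w) \<and>
     (\<not> carries p w \<longrightarrow> int (p - 3) * met p (length w) + word_val p w < met p (Suc (length w)))"
proof (induction w)
  case Nil
  then show ?case using four_le_p by (simp add: word_val_def)
next
  case (Cons a w)
  let ?m = "met p (length w)" and ?M = "met p (Suc (length w))"
  have d: "int (p - 3) = int p - 3"
    using four_le_p by simp
  have a: "a \<le> p - 3" "\<not> (a = p - 3 \<and> carries p w)"
    and IH: "word_val p w < ?m" "\<not> carries p w \<Longrightarrow> (int p - 3) * ?m + word_val p w < ?M"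
    using Cons by (auto simp: admissible_Cons d)
  have val: "word_val p (a # w) = int a * ?m + word_val p w"
    by (simp add: word_val_Cons)
  have rec: "met p (Suc (Suc (length w))) = (int p - 3) * ?M + ?M - ?m"
    by (simp add: algebra_simps)
  have top: "(int p - 3) * ?m < ?M"
    using top_times_met_less d by simp
  have low: "(int a + 1) * ?m \<le> (int p - 3) * ?m" if "a \<noteq> p - 3"
    using that a met_nonneg by (intro mult_right_mono) auto
  have lower: "(int a + 2) * ?m \<le> (int p - 3) * ?m" if "a \<noteq> p - 3" "a \<noteq> p - 4"
    using that a met_nonneg by (intro mult_right_mono) auto
  show ?case
  proof (intro conjI impI)
    show "word_val p (a # w) < met p (length (a # w))"
    proof (cases "a = p - 3")
      case True
      then show ?thesis using a IH val d by simp
    next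
      case False
      then show ?thesis using low IH top val by (simp add: algebra_simps)
    qed
  next
    assume carry: "\<not> carries p (a # w)"
    have "(int p - 3) * ?M + word_val p (a # w) < met p (Suc (Suc (length w)))"
    proof (cases "a = p - 4")
      case True
      then have "int a * ?m = (int p - 4) * ?m" "\<not> carries p w"
        using carry four_le_p by (auto simp: carries_Cons)
      then show ?thesis using IH val rec by (simp add: algebra_simps)
    next
      case False
      moreover have "a \<noteq> p - 3" using carry by (simp add: carries_Cons)
      ultimately show ?thesis using lower IH top val rec by (simp add: algebra_simps)
    qed
    then show "int (p - 3) * met p (length (a # w)) + word_val p (a # w)
        < met p (Suc (length (a # w)))"
      by (simp only: d length_Cons)
  qed
qed

lemma word_val_nonneg: "0 \<le> word_val p w"
  using word_val_rev[of p "rev w"] rval_nonneg by simp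

lemma admissible_word_val_inj:
  "admissible p v \<Longrightarrow> admissible p w \<Longrightarrow> length v = length w \<Longrightarrow>
     word_val p v = word_val p w \<Longrightarrow> v = w"
proof (induction v arbitrary: w)
  case (Cons a v)
  then obtain b w' where w: "w = b # w'" and len: "length w' = length v"
    by (cases w) auto
  let ?m = "met p (length v)"
  have adm: "admissible p v" "admissible p w'"
    using Cons.prems w by (auto simp: admissible_Cons)
  then have "word_val p v < ?m" "word_val p w' < ?m"
    using word_val_less[of v] word_val_less[of w'] len by auto
  then have "int a = (int a * ?m + word_val p v) div ?m" "int b = (int b * ?m + word_val p w') div ?m"
    using word_val_nonneg[of v] word_val_nonneg[of w'] by simp_all
  moreover have eq: "int a * ?m + word_val p v = int b * ?m + word_val p w'"
    using Cons.prems w len by (simp add: word_val_Cons)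
  ultimately have "a = b"
    by simp
  moreover from this have "word_val p v = word_val p w'"
    using eq by simp
  ultimately show ?case
    using Cons.IH[OF adm len[symmetric]] w by simp
qed simp

lemma word_val_less_longer:
  assumes "metallic_word p v" "metallic_word p w" "length v < length w"
  shows "word_val p v < word_val p w"
proof -
  obtain b w' where w: "w = b # w'" "b \<noteq> 0"
    using assms by (cases w) (auto simp: metallic_word_iff)
  have "word_val p v < met p (length v)"
    using assms(1) word_val_less by (auto simp: metallic_word_iff)
  also have "\<dots> \<le> met p (length w')"
    using assms(3) w strict_mono_met by (simp add: strict_mono_less_eq)
  also have "\<dots> \<le> int b * met p (length w')"
    using w met_pos by simp
  also have "\<dots> \<le> word_val p w"
    using w word_val_nonneg[of w'] by (simp add: word_val_Cons)
  finally show ?thesis .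
qed

lemma metallic_word_unique:
  assumes "metallic_word p v" "metallic_word p w" "word_val p v = word_val p w"
  shows "v = w"
proof -
  have "length v = length w"
    using word_val_less_longer[of v w] word_val_less_longer[of w v] assms
    by (metis less_irrefl linorder_neq_iff)
  then show ?thesis
    using assms admissible_word_val_inj by (auto simp: metallic_word_iff)
qed

lemma admissible_incr: "admissible p r \<Longrightarrow> admissible p (incr p r)"
  using four_le_p by (induction r) (auto simp: admissible_Cons carries_Cons)

lemma rval_incr:
  "admissible p r \<Longrightarrow> rval p 0 (incr p r) = rval p 0 r + 1 \<and>
     rval p 1 (incr p r) = rval p 1 r + int (Suc (top_digit p r))"
proof (induction r)
  case Nil
  then show ?case using four_le_p by (simp add: top_digit_def)
next
  case (Cons a r)
  have adm: "admissible p r" "a \<le> p - 3" "\<not> (a = p - 3 \<and> carries p r)"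
    using Cons.prems by (auto simp: admissible_Cons)
  show ?case
  proof (cases "carries p (a # r)")
    case True
    then have "int (Suc (top_digit p (a # r))) = int p - 3"
      and "int a = int (top_digit p r)"
      using adm four_le_p by (auto simp: top_digit_def carries_Cons)
    then show ?thesis
      using True Cons.IH[OF adm(1)] rval_Suc_Suc[of p 0 r] rval_Suc_Suc[of p 0 "incr p r"]
      by (simp add: algebra_simps)
  next
    case False
    then have "int (Suc (top_digit p (a # r))) = int p - 2"
      using four_le_p by (simp add: top_digit_def)
    then show ?thesis
      using False by (simp add: algebra_simps)
  qed
qed

lemma admissible_rcode: "admissible p (rcode p n)"
  by (induction n) (simp_all add: admissible_incr)

lemma rval_rcode: "rval p 0 (rcode p n) = int n"
  by (induction n) (simp_all add: rval_incr admissible_rcode)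

lemma metallic_word_rev_iff:
  "metallic_word p (rev r) \<longleftrightarrow> admissible p r \<and> (r = [] \<or> last r \<noteq> 0)"
  by (auto simp: metallic_word_iff hd_rev)

lemma metallic_code_eq: "metallic_code p n = rev (rcode p n)"
  unfolding metallic_code_def
proof (rule the_equality)
  show "metallic_word p (rev (rcode p n)) \<and> word_val p (rev (rcode p n)) = int n"
    using admissible_rcode rcode_last by (simp add: metallic_word_rev_iff word_val_rev rval_rcode)
  then show "ws = rev (rcode p n)" if "metallic_word p ws \<and> word_val p ws = int n" for ws
    using that metallic_word_unique by metis
qed

lemma signature_Suc: "signature p (Suc n) = hd (rcode p (Suc n))"
  using incr_ne_Nil by (simp add: signature_def metallic_code_eq last_rev)

lemma rcode_eqI:
  assumes "admissible p r" "r = [] \<or> last r \<noteq> 0" "rval p 0 r = int n"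
  shows "rcode p n = r"
  using metallic_word_unique[of "rev (rcode p n)" "rev r"] assms admissible_rcode rcode_last
  by (simp add: metallic_word_rev_iff word_val_rev rval_rcode)

lemma int_mshift: "int (mshift p n) = rval p 1 (rcode p n)"
  by (simp add: mshift_def rval_nonneg)

lemma mshift_Suc: "mshift p (Suc n) = mshift p n + Suc (top_digit p (rcode p n))"
  using rval_incr[OF admissible_rcode[of n]] int_mshift[of n] int_mshift[of "Suc n"] by simp

lemma le_mshift: "n \<le> mshift p n"
  using rval_le_Suc[of 0 "rcode p n"] int_mshift[of n] by (simp add: rval_rcode)

lemma rcode_mshift_add:
  assumes "h \<le> top_digit p (rcode p n)" "n \<noteq> 0 \<or> h \<noteq> 0"
  shows "rcode p (mshift p n + h) = h # rcode p n"
proof (rule rcode_eqI)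
  show "admissible p (h # rcode p n)"
    using assms(1) four_le_p admissible_rcode by (auto simp: admissible_Cons top_digit_def split: if_splits)
  have "rcode p n = [] \<Longrightarrow> n = 0"
    using rval_rcode[of n] by simp
  then show "h # rcode p n = [] \<or> last (h # rcode p n) \<noteq> 0"
    using assms(2) rcode_last[of p n] by auto
  show "rval p 0 (h # rcode p n) = int (mshift p n + h)"
    by (simp add: int_mshift)
qed

lemma metallic_code_mshift_add:
  "h \<le> top_digit p (rcode p n) \<Longrightarrow> n \<noteq> 0 \<or> h \<noteq> 0 \<Longrightarrow>
     metallic_code p (mshift p n + h) = metallic_code p n @ [h]"
  by (simp add: metallic_code_eq rcode_mshift_add)

lemma rcode_Cons:
  assumes "rcode p n = e # t"
  shows "\<exists>m. t = rcode p m \<and> n = mshift p m + e"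
proof -
  define m where "m = nat (rval p 0 t)"
  have "admissible p t" "t = [] \<or> last t \<noteq> 0"
    using admissible_rcode[of n] rcode_last[of p n] assms by (auto simp: admissible_Cons split: if_splits)
  then have t: "t = rcode p m"
    by (intro rcode_eqI[symmetric]) (simp_all add: m_def rval_nonneg)
  have "int n = int e + rval p 1 t"
    using rval_rcode[of n] assms by simp
  then have "n = mshift p m + e"
    using int_mshift[of m] t by simp
  with t show ?thesis by blast
qed

end

(* The sons of node n + 1 come right after those of node n, the last of which has code
   (code n) @ [1] if n is white with signature at most 1, and (code n) @ [0] otherwise. So the
   first son of n + 1, which is its black son, has code (code n) @ [black_digit (rcode n)], and
   black_word recognises the reversed codes of black nodes. *)
fun black_digit :: "nat list \<Rightarrow> nat" where
  "black_digit [] = 2"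
| "black_digit (e # t) = (if e \<le> 1 \<and> e \<noteq> black_digit t then 2 else 1)"

fun black_word :: "nat list \<Rightarrow> bool" where
  "black_word [] = False"
| "black_word (e # t) \<longleftrightarrow> e = black_digit t"

lemma black_digit_cases: "black_digit t = 1 \<or> black_digit t = 2"
  by (cases t) auto

lemma black_digit_white:
  "\<not> black_word r \<Longrightarrow> r \<noteq> [] \<Longrightarrow> black_digit r = (if hd r \<le> 1 then 2 else 1)"
  by (cases r) auto

definition first_son :: "nat \<Rightarrow> nat \<Rightarrow> nat" where
  "first_son p \<nu> = fst (last (tree_data p leftmost \<nu>))"

lemma tree_data_leftmost_Suc:
  "tree_data p leftmost (Suc n) = tree_data p leftmost n @ [(first_son p (Suc n), first_son p (Suc n))]"
  by (cases n) (auto simp: Let_def first_son_def leftmost_def)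

lemma first_son_1: "first_son p (Suc 0) = 2"
  by (simp add: first_son_def leftmost_def)

lemma first_son_Suc: "n \<noteq> 0 \<Longrightarrow> first_son p (Suc n) = first_son p n + num_sons p leftmost n"
  by (simp add: first_son_def Let_def num_sons_def is_black_def)

lemma black_sons_leftmost: "snd ` set (tree_data p leftmost n) = first_son p ` {1..n}"
proof (induction n)
  case (Suc n)
  have "{1..Suc n} = insert (Suc n) {1..n}"
    by auto
  then show ?case
    using Suc by (simp only: tree_data_leftmost_Suc) auto
qed simp

lemma is_black_leftmost_iff_first_son: "is_black p leftmost \<nu> \<longleftrightarrow> \<nu> \<in> first_son p ` {1..\<nu>}"
  by (simp add: is_black_def black_sons_leftmost)

lemma sons_leftmost: "sons p leftmost \<nu> = [first_son p \<nu>..<first_son p \<nu> + num_sons p leftmost \<nu>]"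
  by (simp add: sons_def first_son_def Let_def)

lemma map_upt_2_Suc: "map f [2..<Suc n] = map (\<lambda>h. f (h + 1)) [1..<n]"
  by (simp add: list_eq_iff_nth_eq del: upt_Suc)

lemma map_add_upt_left: "map (\<lambda>h. a + h) [x..<y] = [a + x..<a + y]"
  by (simp add: list_eq_iff_nth_eq)

locale metallic_tree =
  fixes p :: nat
  assumes five_le_p: "5 \<le> p"

sublocale metallic_tree \<subseteq> metallic
  using five_le_p by unfold_locales simp

context metallic_tree
begin

lemma black_digit_carries: "carries p s \<Longrightarrow> black_digit s = 1"
  using five_le_p by (induction s) (auto simp: carries_Cons)

lemma one_le_top_digit: "1 \<le> top_digit p s"
  using five_le_p by (auto simp: top_digit_def)

lemma black_digit_le_top: "black_digit s \<le> top_digit p s"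
  using five_le_p black_digit_carries black_digit_cases[of s] by (auto simp: top_digit_def)

lemma black_digit_incr:
  "black_digit s + (if black_word (incr p s) then p - 3 else p - 2) =
     Suc (top_digit p s) + black_digit (incr p s)"
proof (cases "carries p s")
  case True
  then obtain a t where "s = a # t"
    by (cases s) auto
  then have "incr p s = 0 # incr p t"
    using True by simp
  then show ?thesis
    using True black_digit_carries five_le_p black_digit_cases[of "incr p t"]
    by (auto simp: top_digit_def)
next
  case False
  then show ?thesis
    using five_le_p black_digit_cases[of "tl s"]
    by (cases s) (auto simp: top_digit_def)
qed

lemma black_word_rcode_iff:
  "black_word (rcode p \<nu>) \<longleftrightarrow> (\<exists>n<\<nu>. \<nu> = mshift p n + black_digit (rcode p n))"
proof
  assume "black_word (rcode p \<nu>)"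
  then obtain t where r: "rcode p \<nu> = black_digit t # t"
    by (cases "rcode p \<nu>") auto
  then obtain m where "t = rcode p m" "\<nu> = mshift p m + black_digit t"
    using rcode_Cons by blast
  moreover have "m < \<nu>"
    using calculation le_mshift[of m] black_digit_cases[of t] by auto
  ultimately show "\<exists>n<\<nu>. \<nu> = mshift p n + black_digit (rcode p n)"
    by blast
next
  assume "\<exists>n<\<nu>. \<nu> = mshift p n + black_digit (rcode p n)"
  then obtain n where \<nu>: "\<nu> = mshift p n + black_digit (rcode p n)"
    by blast
  have "rcode p (mshift p n + black_digit (rcode p n)) = black_digit (rcode p n) # rcode p n"
    using black_digit_cases[of "rcode p n"] by (intro rcode_mshift_add black_digit_le_top) auto
  then show "black_word (rcode p \<nu>)"
    using \<nu> by simp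
qed

lemma is_black_leftmost_if_first_sons:
  assumes "\<And>m. m < \<nu> \<Longrightarrow> first_son p (Suc m) = mshift p m + black_digit (rcode p m)"
  shows "is_black p leftmost \<nu> \<longleftrightarrow> black_word (rcode p \<nu>)"
proof -
  have "first_son p ` {1..\<nu>} = first_son p ` Suc ` {..<\<nu>}"
    by (simp add: atLeast1_atMost_eq_remove0 image_Suc_lessThan)
  also have "\<dots> = (\<lambda>m. mshift p m + black_digit (rcode p m)) ` {..<\<nu>}"
    using assms by (auto simp: image_image)
  finally show ?thesis
    by (auto simp: is_black_leftmost_iff_first_son black_word_rcode_iff)
qed

lemma first_son_eq: "first_son p (Suc n) = mshift p n + black_digit (rcode p n)"
proof (induction n rule: less_induct)
  case (less n)
  show ?case
  proof (cases n)
    case 0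
    then show ?thesis by (simp add: first_son_1)
  next
    case (Suc k)
    have "is_black p leftmost n \<longleftrightarrow> black_word (rcode p n)"
      using less.IH by (rule is_black_leftmost_if_first_sons)
    then have "first_son p (Suc n) =
        mshift p k + black_digit (rcode p k) + (if black_word (incr p (rcode p k)) then p - 3 else p - 2)"
      using less.IH[of k] Suc by (simp add: first_son_Suc num_sons_def)
    then show ?thesis
      using black_digit_incr[of "rcode p k"] Suc by (simp add: mshift_Suc)
  qed
qed

lemma is_black_leftmost_iff: "is_black p leftmost \<nu> \<longleftrightarrow> black_word (rcode p \<nu>)"
  using first_son_eq by (rule is_black_leftmost_if_first_sons)

lemma sons_leftmost_Suc:
  "sons p leftmost (Suc n) =
     map (\<lambda>h. mshift p n + h) [black_digit (rcode p n)..<Suc (top_digit p (rcode p n))] @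
     map (\<lambda>h. mshift p (Suc n) + h) [0..<black_digit (rcode p (Suc n))]"
proof -
  let ?s = "rcode p n" and ?r = "rcode p (Suc n)"
  have "black_digit ?s + num_sons p leftmost (Suc n) = Suc (top_digit p ?s) + black_digit ?r"
    using black_digit_incr[of ?s] by (simp add: num_sons_def is_black_leftmost_iff)
  then have "first_son p (Suc n) + num_sons p leftmost (Suc n) = mshift p (Suc n) + black_digit ?r"
    by (simp add: first_son_eq mshift_Suc)
  then have "sons p leftmost (Suc n) = [first_son p (Suc n)..<mshift p (Suc n) + black_digit ?r]"
    by (simp only: sons_leftmost)
  also have "\<dots> = [first_son p (Suc n)..<mshift p (Suc n)] @
      [mshift p (Suc n)..<mshift p (Suc n) + black_digit ?r]"
    using black_digit_le_top[of ?s]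
    by (intro upt_add_eq_append) (simp add: first_son_eq mshift_Suc)
  finally show ?thesis
    by (simp only: map_add_upt_left add_0_right first_son_eq mshift_Suc)
qed

lemma sons_leftmost_codes:
  "map (metallic_code p) (sons p leftmost (Suc n)) =
     map (\<lambda>h. metallic_code p n @ [h]) [black_digit (rcode p n)..<Suc (top_digit p (rcode p n))] @
     map (\<lambda>h. metallic_code p (Suc n) @ [h]) [0..<black_digit (rcode p (Suc n))]"
  unfolding sons_leftmost_Suc map_append map_map
proof (intro arg_cong2[where f = "(@)"] map_cong refl)
  fix h assume "h \<in> set [black_digit (rcode p n)..<Suc (top_digit p (rcode p n))]"
  then show "(metallic_code p \<circ> (+) (mshift p n)) h = metallic_code p n @ [h]"
    using black_digit_cases[of "rcode p n"] by (auto simp: metallic_code_mshift_add)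
next
  fix h assume "h \<in> set [0..<black_digit (rcode p (Suc n))]"
  then show "(metallic_code p \<circ> (+) (mshift p (Suc n))) h = metallic_code p (Suc n) @ [h]"
    using black_digit_cases[of "rcode p (Suc n)"] one_le_top_digit[of "rcode p (Suc n)"]
    unfolding comp_apply by (intro metallic_code_mshift_add) auto
qed

lemma sons_leftmost_codes_black:
  assumes "black_word (rcode p (Suc n))"
  shows "hd (rcode p (Suc n)) \<in> {1, 2}"
    and "map (metallic_code p) (sons p leftmost (Suc n)) =
      map (\<lambda>h. metallic_code p n @ [h + 1]) [1..<p - 3] @ [metallic_code p (Suc n) @ [0]]"
proof -
  obtain e t where r: "rcode p (Suc n) = e # t"
    by (metis incr_ne_Nil neq_Nil_conv rcode_Suc)
  then have e: "e = black_digit t"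
    using assms by simp
  then show "hd (rcode p (Suc n)) \<in> {1, 2}"
    using r black_digit_cases[of t] by auto
  have "black_digit (rcode p (Suc n)) = 1" "top_digit p (rcode p n) = p - 3"
    using r e black_digit_cases[of t] by (auto simp: top_digit_rcode)
  moreover from this have "black_digit (rcode p n) = 2"
    using black_digit_incr[of "rcode p n"] assms five_le_p by simp
  ultimately show "map (metallic_code p) (sons p leftmost (Suc n)) =
      map (\<lambda>h. metallic_code p n @ [h + 1]) [1..<p - 3] @ [metallic_code p (Suc n) @ [0]]"
    by (simp only: sons_leftmost_codes map_upt_2_Suc) simp
qed

lemma white_node_digits:
  assumes "\<not> black_word (rcode p (Suc n))"
  shows "black_digit (rcode p n) + (p - 2) = Suc (top_digit p (rcode p n)) + black_digit (rcode p (Suc n))"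
    and "black_digit (rcode p (Suc n)) = (if hd (rcode p (Suc n)) \<le> 1 then 2 else 1)"
  using black_digit_incr[of "rcode p n"] assms incr_ne_Nil by (simp_all add: black_digit_white)

lemma sons_leftmost_codes_white_0:
  assumes "\<not> black_word (rcode p (Suc n))" "hd (rcode p (Suc n)) = 0"
  shows "map (metallic_code p) (sons p leftmost (Suc n)) =
    map (\<lambda>h. metallic_code p n @ [h]) [1..<p - 3] @
      [metallic_code p (Suc n) @ [0], metallic_code p (Suc n) @ [1]]"
proof -
  have "black_digit (rcode p (Suc n)) = 2" "Suc (top_digit p (rcode p n)) = p - 3"
    "black_digit (rcode p n) = 1"
    using white_node_digits[OF assms(1)] assms(2) five_le_p by (auto simp: top_digit_rcode)
  then show ?thesis
    by (simp only: sons_leftmost_codes) (simp add: numeral_2_eq_2)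
qed

lemma sons_leftmost_codes_white_1:
  assumes "\<not> black_word (rcode p (Suc n))" "hd (rcode p (Suc n)) = 1"
  shows "map (metallic_code p) (sons p leftmost (Suc n)) =
    map (\<lambda>h. metallic_code p n @ [h + 1]) [1..<p - 3] @
      [metallic_code p (Suc n) @ [0], metallic_code p (Suc n) @ [1]]"
proof -
  have "black_digit (rcode p (Suc n)) = 2" "top_digit p (rcode p n) = p - 3"
    "black_digit (rcode p n) = 2"
    using white_node_digits[OF assms(1)] assms(2) five_le_p by (auto simp: top_digit_rcode)
  then show ?thesis
    by (simp only: sons_leftmost_codes map_upt_2_Suc) (simp add: numeral_2_eq_2)
qed

lemma sons_leftmost_codes_white_ge_2:
  assumes "\<not> black_word (rcode p (Suc n))" "2 \<le> hd (rcode p (Suc n))"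
  shows "map (metallic_code p) (sons p leftmost (Suc n)) =
    map (\<lambda>h. metallic_code p n @ [h]) [1..<p - 2] @ [metallic_code p (Suc n) @ [0]]"
proof -
  have "black_digit (rcode p (Suc n)) = 1" "Suc (top_digit p (rcode p n)) = p - 2"
    "black_digit (rcode p n) = 1"
    using white_node_digits[OF assms(1)] assms(2) five_le_p by (auto simp: top_digit_rcode)
  then show ?thesis
    by (simp only: sons_leftmost_codes) simp
qed

end

theorem lemma8:
  fixes p \<nu> :: nat
  assumes "p \<ge> 5" and "\<nu> \<ge> 1"
  defines "u \<equiv> metallic_code p \<nu>" and "w \<equiv> metallic_code p (\<nu> - 1)"
  shows
   "(is_black p leftmost \<nu> \<longrightarrow>
       signature p \<nu> \<in> {1, 2} \<and>
       map (metallic_code p) (sons p leftmost \<nu>) =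
         map (\<lambda>h. w @ [h + 1]) [1..<p - 3] @ [u @ [0]])
  \<and> (\<not> is_black p leftmost \<nu> \<and> signature p \<nu> = 0 \<longrightarrow>
       map (metallic_code p) (sons p leftmost \<nu>) =
         map (\<lambda>h. w @ [h]) [1..<p - 3] @ [u @ [0], u @ [1]])
  \<and> (\<not> is_black p leftmost \<nu> \<and> signature p \<nu> = 1 \<longrightarrow>
       map (metallic_code p) (sons p leftmost \<nu>) =
         map (\<lambda>h. w @ [h + 1]) [1..<p - 3] @ [u @ [0], u @ [1]])
  \<and> (\<not> is_black p leftmost \<nu> \<and> 2 \<le> signature p \<nu> \<and> signature p \<nu> \<le> p - 3 \<longrightarrow>
       map (metallic_code p) (sons p leftmost \<nu>) =
         map (\<lambda>h. w @ [h]) [1..<p - 2] @ [u @ [0]])"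
proof -
  interpret metallic_tree p
    using assms(1) by unfold_locales
  obtain n where \<nu>: "\<nu> = Suc n"
    using assms(2) by (cases \<nu>) auto
  show ?thesis
    unfolding u_def w_def \<nu> diff_Suc_1 is_black_leftmost_iff signature_Suc
    using sons_leftmost_codes_black sons_leftmost_codes_white_0 sons_leftmost_codes_white_1
      sons_leftmost_codes_white_ge_2 by simp
qed

end
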